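(* Let $\mathbb{S}^{D-1}$ be the unit sphere of $\mathbb{R}^D$ and take $\mathcal{X}=\mathbb{S}^{D-1}$. For any finite nonempty $\mathcal{X}_0\subseteq\mathbb{S}^{D-1}$, $F_\infty(\mathcal{X}_0)=1/\cos\gamma(\pm\mathcal{X}_0)$, where $\pm\mathcal{X}_0=\{\pm\boldsymbol{v}:\boldsymbol{v}\in\mathcal{X}_0\}$.
   Context: For $\boldsymbol{x}\in\mathbb{R}^D$ and finite $\mathcal{X}_0=\{\boldsymbol{v}_1,\dots,\boldsymbol{v}_m\}$, $f_\infty(\boldsymbol{x},\mathcal{X}_0):=\min_{\boldsymbol{c}\in\mathbb{R}^m}\|\boldsymbol{c}\|_1$ subject to $\boldsymbol{x}=\sum_{i}c_i\boldsymbol{v}_i$, with value $+\infty$ if infeasible; $F_\infty(\mathcal{X}_0):=\sup_{\boldsymbol{x}\in\mathbb{S}^{D-1}}f_\infty(\boldsymbol{x},\mathcal{X}_0)$. The covering radius of $\mathcal{V}\subseteq\mathbb{S}^{D-1}$ is $\gamma(\mathcal{V}):=\max_{\boldsymbol{w}\in\mathbb{S}^{D-1}}\min_{\boldsymbol{v}\in\mathcal{V}}\cos^{-1}\langle\boldsymbol{v},\boldsymbol{w}\rangle$. Convention: $1/0=+\infty$. *)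

theory Defs
  imports "HOL-Analysis.Analysis" "HOL-Library.Extended_Real"
begin

text \<open>f_infinity(x, X0): minimal l1-norm of coefficients representing x as a linear
  combination of the (distinct) elements of the finite set X0; +infinity if infeasible
  (Inf of the empty set of extended reals is +infinity).\<close>
definition f_inf :: "'a::euclidean_space \<Rightarrow> 'a set \<Rightarrow> ereal" where
  "f_inf x X0 = Inf {ereal (\<Sum>v\<in>X0. \<bar>c v\<bar>) | c :: 'a \<Rightarrow> real. x = (\<Sum>v\<in>X0. c v *\<^sub>R v)}"

definition F_inf :: "'a::euclidean_space set \<Rightarrow> ereal" where
  "F_inf X0 = (SUP x\<in>sphere 0 1. f_inf x X0)"

definition covering_radius :: "'a::euclidean_space set \<Rightarrow> real" where
  "covering_radius V = (SUP w\<in>sphere 0 1. Min ((\<lambda>v. arccos (v \<bullet> w)) ` V))"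

definition inv_ereal :: "real \<Rightarrow> ereal" where
  "inv_ereal t = (if t = 0 then \<infinity> else ereal (1 / t))"

end

(*
  Let V = X0 \<union> -X0 and let h w = max {v \<bullet> w | v \<in> V} be its support function; by symmetry
  h w = max |v \<bullet> w| \<ge> 0.  Since arccos is decreasing, cos of the covering radius of V is
  m = min {h w | w \<in> S^(D-1)}, attained at some unit vector w0 because h is 1-Lipschitz.
  Lower bound: for any representation w0 = \<Sum> c v v, pairing with w0 gives
  1 = \<Sum> c v (v \<bullet> w0) \<le> m \<Sum> |c v|, so f_inf w0 X0 \<ge> 1/m (and no representation exists
  if m = 0).  Upper bound: if m > 0, separating a point from conv V by a hyperplane shows that
  the ball of radius m lies in conv V, and every point of conv (X0 \<union> -X0) is a combination of X0
  with l1-norm at most 1; rescaling gives f_inf x X0 \<le> 1/m on the sphere.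
*)
theory Submission
  imports Defs
begin

definition support_function :: "'a::real_inner set \<Rightarrow> 'a \<Rightarrow> real" where
  "support_function V w = Max ((\<lambda>v. v \<bullet> w) ` V)"

lemma inner_le_support_function:
  assumes "finite V" and "v \<in> V"
  shows "v \<bullet> w \<le> support_function V w"
  using assms unfolding support_function_def by simp

lemma support_function_attained:
  assumes "finite V" and "V \<noteq> {}"
  obtains v where "v \<in> V" and "support_function V w = v \<bullet> w"
proof -
  have "support_function V w \<in> (\<lambda>v. v \<bullet> w) ` V"
    unfolding support_function_def using assms by (intro Max_in) auto
  then show ?thesis using that by blast
qed

lemma abs_inner_le_support_function:
  assumes "finite V" and "uminus ` V \<subseteq> V" and "v \<in> V"
  shows "\<bar>v \<bullet> w\<bar> \<le> support_function V w"
proof -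
  have "- v \<in> V" using assms(2,3) by blast
  then show ?thesis
    using inner_le_support_function[OF assms(1) assms(3), of w]
      inner_le_support_function[OF assms(1) \<open>- v \<in> V\<close>, of w]
    by (simp add: abs_le_iff)
qed

lemma support_function_nonneg:
  assumes "finite V" and "uminus ` V \<subseteq> V" and "V \<noteq> {}"
  shows "0 \<le> support_function V w"
proof -
  obtain v where "v \<in> V" using assms(3) by blast
  then show ?thesis using abs_inner_le_support_function[OF assms(1,2), of v w] by linarith
qed

lemma abs_inner_le_1:
  fixes v w :: "'a::real_inner"
  assumes "norm v \<le> 1" and "norm w \<le> 1"
  shows "\<bar>v \<bullet> w\<bar> \<le> 1"
  using Cauchy_Schwarz_ineq2[of v w] assms mult_le_one[OF assms(1) _ assms(2)] by simp

lemma abs_support_function_le_1: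
  assumes "finite V" and "V \<noteq> {}" and "V \<subseteq> cball 0 1" and "norm w \<le> 1"
  shows "\<bar>support_function V w\<bar> \<le> 1"
proof -
  obtain v where "v \<in> V" and "support_function V w = v \<bullet> w"
    using support_function_attained[OF assms(1,2)] .
  then show ?thesis using abs_inner_le_1[of v w] assms(3,4) by auto
qed

lemma lipschitz_support_function:
  assumes "finite V" and "V \<noteq> {}" and "V \<subseteq> cball 0 1"
  shows "1-lipschitz_on UNIV (support_function V)"
proof (rule lipschitz_onI)
  have one_sided: "support_function V w - support_function V w' \<le> dist w w'" for w w'
  proof -
    obtain v where v: "v \<in> V" "support_function V w = v \<bullet> w"
      using support_function_attained[OF assms(1,2)] .
    have "v \<bullet> (w - w') \<le> norm v * norm (w - w')"
      using Cauchy_Schwarz_ineq2[of v "w - w'"] by linarith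
    also have "\<dots> \<le> norm (w - w')"
      using v(1) assms(3) by (intro mult_left_le_one_le) auto
    also have "\<dots> = dist w w'" by (simp add: dist_norm)
    finally show ?thesis
      using v inner_le_support_function[OF assms(1) v(1), of w'] by (simp add: inner_diff_right)
  qed
  show "dist (support_function V w) (support_function V w') \<le> 1 * dist w w'" for w w'
    using one_sided[of w w'] one_sided[of w' w] by (simp add: dist_real_def abs_le_iff dist_commute)
qed simp

lemma support_function_attains_min_on_sphere:
  fixes V :: "'a::euclidean_space set"
  assumes "finite V" and "V \<noteq> {}" and "V \<subseteq> cball 0 1"
  obtains w0 where "w0 \<in> sphere 0 1"
    and "\<And>w. w \<in> sphere 0 1 \<Longrightarrow> support_function V w0 \<le> support_function V w"
proof -
  have "continuous_on (sphere 0 1) (support_function V)"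
    using lipschitz_on_continuous_on[OF lipschitz_support_function[OF assms]]
    by (rule continuous_on_subset) simp
  moreover have "sphere (0::'a) 1 \<noteq> {}" by simp
  ultimately show ?thesis
    using continuous_attains_inf[OF compact_sphere] that by blast
qed

lemma covering_radius_eq_arccos_support_function:
  fixes V :: "'a::euclidean_space set"
  assumes V: "finite V" "V \<noteq> {}" "V \<subseteq> cball 0 1"
    and w0: "w0 \<in> sphere 0 1"
    and min: "\<And>w. w \<in> sphere 0 1 \<Longrightarrow> support_function V w0 \<le> support_function V w"
  shows "covering_radius V = arccos (support_function V w0)"
proof -
  have Min_arccos: "Min ((\<lambda>v. arccos (v \<bullet> w)) ` V) = arccos (support_function V w)"
    if w: "w \<in> sphere 0 1" for w
  proof (rule Min_eqI)
    obtain v0 where "v0 \<in> V" and "support_function V w = v0 \<bullet> w"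
      using support_function_attained[OF V(1,2)] .
    then show "arccos (support_function V w) \<in> (\<lambda>v. arccos (v \<bullet> w)) ` V" by simp
  next
    fix y assume "y \<in> (\<lambda>v. arccos (v \<bullet> w)) ` V"
    then obtain v where v: "v \<in> V" "y = arccos (v \<bullet> w)" by blast
    have "\<bar>v \<bullet> w\<bar> \<le> 1" using abs_inner_le_1[of v w] v(1) V(3) w by auto
    moreover have "support_function V w \<le> 1"
      using abs_support_function_le_1[OF V, of w] w by simp
    ultimately show "arccos (support_function V w) \<le> y"
      using v inner_le_support_function[OF V(1) v(1), of w] by (simp add: arccos_le_arccos)
  qed (use V(1) in simp)
  show ?thesis
    unfolding covering_radius_def
  proof (rule cSup_eq_maximum)
    show "arccos (support_function V w0) \<in> (\<lambda>w. Min ((\<lambda>v. arccos (v \<bullet> w)) ` V)) ` sphere 0 1"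
      using Min_arccos[OF w0] w0 by (intro image_eqI) auto
  next
    fix y assume "y \<in> (\<lambda>w. Min ((\<lambda>v. arccos (v \<bullet> w)) ` V)) ` sphere 0 1"
    then obtain w where w: "w \<in> sphere 0 1" "y = arccos (support_function V w)"
      using Min_arccos by auto
    have "\<bar>support_function V w\<bar> \<le> 1" "\<bar>support_function V w0\<bar> \<le> 1"
      using abs_support_function_le_1[OF V] w(1) w0 by auto
    then show "y \<le> arccos (support_function V w0)"
      using w min[OF w(1)] by (simp add: arccos_le_arccos)
  qed
qed

lemma convex_hull_plus_minus_imp_l1_combination:
  fixes X :: "'a::real_vector set"
  assumes "finite X" and "y \<in> convex hull (X \<union> uminus ` X)"
  obtains c where "y = (\<Sum>v\<in>X. c v *\<^sub>R v)" and "(\<Sum>v\<in>X. \<bar>c v\<bar>) \<le> 1"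
proof -
  define B where "B = {y. \<exists>c. y = (\<Sum>v\<in>X. c v *\<^sub>R v) \<and> (\<Sum>v\<in>X. \<bar>c v\<bar>) \<le> 1}"
  have "X \<union> uminus ` X \<subseteq> B"
  proof
    fix y assume "y \<in> X \<union> uminus ` X"
    then obtain v s where vs: "v \<in> X" "\<bar>s\<bar> = 1" "y = s *\<^sub>R v"
      by (metis UnE abs_one abs_minus_cancel imageE scaleR_minus1_left scaleR_one)
    let ?c = "\<lambda>u. if u = v then s else 0"
    have "y = (\<Sum>u\<in>X. ?c u *\<^sub>R u)" and "(\<Sum>u\<in>X. \<bar>?c u\<bar>) \<le> 1"
      using vs assms(1) by (simp_all add: if_distrib if_distribR cong: if_cong)
    then show "y \<in> B" unfolding B_def by (auto intro!: exI[of _ ?c])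
  qed
  moreover have "convex B"
    unfolding convex_def
  proof (intro ballI allI impI)
    fix x y and s t :: real assume "x \<in> B" "y \<in> B" and st: "0 \<le> s" "0 \<le> t" "s + t = 1"
    then obtain c d where
      c: "x = (\<Sum>v\<in>X. c v *\<^sub>R v)" "(\<Sum>v\<in>X. \<bar>c v\<bar>) \<le> 1" and
      d: "y = (\<Sum>v\<in>X. d v *\<^sub>R v)" "(\<Sum>v\<in>X. \<bar>d v\<bar>) \<le> 1"
      unfolding B_def by blast
    have "s *\<^sub>R x + t *\<^sub>R y = (\<Sum>v\<in>X. (s * c v + t * d v) *\<^sub>R v)"
      unfolding c d by (simp add: scaleR_sum_right sum.distrib scaleR_add_left)
    moreover have "(\<Sum>v\<in>X. \<bar>s * c v + t * d v\<bar>) \<le> s * (\<Sum>v\<in>X. \<bar>c v\<bar>) + t * (\<Sum>v\<in>X. \<bar>d v\<bar>)"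
      unfolding sum_distrib_left sum.distrib[symmetric]
      by (rule sum_mono) (use st in \<open>simp add: abs_mult order.trans[OF abs_triangle_ineq]\<close>)
    moreover have "s * (\<Sum>v\<in>X. \<bar>c v\<bar>) + t * (\<Sum>v\<in>X. \<bar>d v\<bar>) \<le> s + t"
      using c(2) d(2) st by (intro add_mono mult_left_le) auto
    ultimately show "s *\<^sub>R x + t *\<^sub>R y \<in> B"
      unfolding B_def using st by fastforce
  qed
  ultimately have "y \<in> B" using hull_minimal assms(2) by blast
  then show ?thesis using that unfolding B_def by blast
qed

lemma cball_subset_convex_hull:
  fixes V :: "'a::euclidean_space set"
  assumes "finite V" and "V \<noteq> {}"
    and cover: "\<And>w. w \<in> sphere 0 1 \<Longrightarrow> m \<le> support_function V w"
  shows "cball 0 m \<subseteq> convex hull V"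
proof
  fix y assume y: "y \<in> cball (0::'a) m"
  show "y \<in> convex hull V"
  proof (rule ccontr)
    assume "y \<notin> convex hull V"
    moreover have "closed (convex hull V)"
      by (simp add: assms(1) compact_imp_closed finite_imp_compact_convex_hull)
    ultimately obtain a b where ab: "a \<bullet> y < b" and hull: "\<forall>x\<in>convex hull V. b < a \<bullet> x"
      using separating_hyperplane_closed_point[OF convex_convex_hull] by blast
    have "a \<noteq> 0"
    proof
      assume "a = 0"
      obtain v where "v \<in> V" using assms(2) by blast
      then show False using hull ab \<open>a = 0\<close> by (fastforce simp: hull_inc)
    qed
    then have "- (inverse (norm a)) *\<^sub>R a \<in> sphere 0 1" by simp
    moreover obtain v where v: "v \<in> V"
      "support_function V (- (inverse (norm a)) *\<^sub>R a) = v \<bullet> (- (inverse (norm a)) *\<^sub>R a)"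
      using support_function_attained[OF assms(1,2)] .
    ultimately have "m \<le> v \<bullet> (- (inverse (norm a)) *\<^sub>R a)" using cover by metis
    then have "m * norm a \<le> - (a \<bullet> v)"
      using \<open>a \<noteq> 0\<close> by (simp add: field_simps inner_commute)
    moreover have "- (a \<bullet> y) \<le> norm a * m"
      using Cauchy_Schwarz_ineq2[of a y] y mult_left_mono[of "norm y" m "norm a"] by auto
    moreover have "b < a \<bullet> v" using hull v(1) by (simp add: hull_inc)
    ultimately show False using ab by (simp add: mult.commute)
  qed
qed

lemma inv_ereal_le_f_inf:
  fixes X0 :: "'a::euclidean_space set"
  assumes "norm w = 1" and "\<And>v. v \<in> X0 \<Longrightarrow> \<bar>v \<bullet> w\<bar> \<le> m"
  shows "inv_ereal m \<le> f_inf w X0"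
  unfolding f_inf_def
proof (rule Inf_greatest, clarify)
  fix c assume w: "w = (\<Sum>v\<in>X0. c v *\<^sub>R v)"
  have "1 = (\<Sum>v\<in>X0. c v *\<^sub>R v) \<bullet> w"
    using assms(1) w by (metis norm_eq_1)
  also have "\<dots> = (\<Sum>v\<in>X0. c v * (v \<bullet> w))" by (simp add: inner_sum_left)
  also have "\<dots> \<le> (\<Sum>v\<in>X0. \<bar>c v\<bar> * m)"
  proof (rule sum_mono)
    fix v assume "v \<in> X0"
    then have "\<bar>c v\<bar> * \<bar>v \<bullet> w\<bar> \<le> \<bar>c v\<bar> * m" using assms(2) by (simp add: mult_left_mono)
    then show "c v * (v \<bullet> w) \<le> \<bar>c v\<bar> * m" by (metis abs_ge_self abs_mult order_trans)
  qed
  also have "\<dots> = (\<Sum>v\<in>X0. \<bar>c v\<bar>) * m" by (simp add: sum_distrib_right)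
  finally have le: "1 \<le> (\<Sum>v\<in>X0. \<bar>c v\<bar>) * m" .
  have "0 < m"
  proof (rule ccontr)
    assume "\<not> 0 < m"
    then have "(\<Sum>v\<in>X0. \<bar>c v\<bar>) * m \<le> 0" by (simp add: mult_nonneg_nonpos sum_nonneg)
    then show False using le by simp
  qed
  moreover from this le have "1 / m \<le> (\<Sum>v\<in>X0. \<bar>c v\<bar>)" by (simp add: divide_le_eq)
  ultimately show "inv_ereal m \<le> ereal (\<Sum>v\<in>X0. \<bar>c v\<bar>)" by (simp add: inv_ereal_def)
qed

lemma f_inf_le_if_cball_subset_convex_hull:
  fixes X0 :: "'a::euclidean_space set"
  assumes "finite X0" and "0 < m" and "cball 0 m \<subseteq> convex hull (X0 \<union> uminus ` X0)"
    and "norm x \<le> 1"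
  shows "f_inf x X0 \<le> ereal (1 / m)"
proof -
  have "m *\<^sub>R x \<in> convex hull (X0 \<union> uminus ` X0)"
    using assms(2-4) mult_left_le[of "norm x" m] by (intro subsetD[OF assms(3)]) simp
  then obtain c where c: "m *\<^sub>R x = (\<Sum>v\<in>X0. c v *\<^sub>R v)" "(\<Sum>v\<in>X0. \<bar>c v\<bar>) \<le> 1"
    using convex_hull_plus_minus_imp_l1_combination[OF assms(1)] by blast
  have "x = (\<Sum>v\<in>X0. (c v / m) *\<^sub>R v)"
    using arg_cong[OF c(1), of "scaleR (1 / m)"] assms(2) by (simp add: scaleR_sum_right)
  then have "f_inf x X0 \<le> ereal (\<Sum>v\<in>X0. \<bar>c v / m\<bar>)"
    unfolding f_inf_def by (intro Inf_lower) (auto intro!: exI[of _ "\<lambda>v. c v / m"])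
  also have "(\<Sum>v\<in>X0. \<bar>c v / m\<bar>) = (\<Sum>v\<in>X0. \<bar>c v\<bar>) / m"
    using assms(2) by (simp add: sum_divide_distrib)
  also have "\<dots> \<le> 1 / m" using c(2) assms(2) by (simp add: divide_right_mono)
  finally show ?thesis by simp
qed

lemma F_inf_le_if_cball_subset_convex_hull:
  fixes X0 :: "'a::euclidean_space set"
  assumes "finite X0" and "0 < m" and "cball 0 m \<subseteq> convex hull (X0 \<union> uminus ` X0)"
  shows "F_inf X0 \<le> ereal (1 / m)"
  unfolding F_inf_def
  using f_inf_le_if_cball_subset_convex_hull[OF assms] by (intro SUP_least) simp

theorem lemma5:
  fixes X0 :: "'a::euclidean_space set"
  assumes "finite X0" and "X0 \<noteq> {}" and "X0 \<subseteq> sphere 0 1"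
  shows "F_inf X0 = inv_ereal (cos (covering_radius (X0 \<union> uminus ` X0)))"
proof -
  define V where "V = X0 \<union> uminus ` X0"
  have V: "finite V" "V \<noteq> {}" "V \<subseteq> cball 0 1" and sym: "uminus ` V \<subseteq> V"
    using assms unfolding V_def by (auto simp: image_image)
  obtain w0 where w0: "w0 \<in> sphere 0 1"
    and min: "\<And>w. w \<in> sphere 0 1 \<Longrightarrow> support_function V w0 \<le> support_function V w"
    using support_function_attains_min_on_sphere[OF V] by blast
  define m where "m = support_function V w0"
  have "0 \<le> m" "m \<le> 1"
    unfolding m_def using support_function_nonneg[OF V(1) sym V(2)] abs_support_function_le_1[OF V] w0
    by auto
  then have cos_m: "cos (covering_radius V) = m"
    using covering_radius_eq_arccos_support_function[OF V w0 min] by (simp add: m_def)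
  have "inv_ereal m \<le> f_inf w0 X0"
    using w0 abs_inner_le_support_function[OF V(1) sym]
    by (intro inv_ereal_le_f_inf) (auto simp: m_def V_def)
  also have "\<dots> \<le> F_inf X0" unfolding F_inf_def using w0 by (rule SUP_upper)
  finally have lower: "inv_ereal m \<le> F_inf X0" .
  have "F_inf X0 = inv_ereal m"
  proof (cases "m = 0")
    case True
    then show ?thesis using lower by (simp add: inv_ereal_def)
  next
    case False
    with \<open>0 \<le> m\<close> have "0 < m" by simp
    have "cball 0 m \<subseteq> convex hull V"
      using cball_subset_convex_hull[OF V(1,2)] min by (simp add: m_def)
    then have "F_inf X0 \<le> ereal (1 / m)"
      using F_inf_le_if_cball_subset_convex_hull[OF assms(1) \<open>0 < m\<close>] by (simp add: V_def)
    then show ?thesis using lower \<open>0 < m\<close> by (simp add: inv_ereal_def)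
  qed
  then show ?thesis using cos_m by (simp add: V_def)
qed

end
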